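(* For every $n\geqslant 2$, the monoid $\mathcal{AO}_n$ has rank $n$, i.e. the minimum size of a generating set of $\mathcal{AO}_n$ (as a monoid) is $n$.
   Context: Let $\Omega_n=\{1<2<\cdots<n\}$ and $\mathcal{I}_n$ the monoid of all partial injective maps of $\Omega_n$. $\mathcal{AI}_n$ is the set of all $\alpha\in\mathcal{I}_n$ with $\alpha=\sigma|_{\mathrm{Dom}(\alpha)}$ for some even permutation $\sigma$ of $\Omega_n$; $\mathcal{POI}_n$ is the set of order-preserving elements of $\mathcal{I}_n$ and $\mathcal{AO}_n=\mathcal{AI}_n\cap\mathcal{POI}_n$. *)

theory Defs
  imports "HOL-Combinatorics.Permutations"
begin

definition Omega :: "nat \<Rightarrow> nat set" where
  "Omega n = {1..n}"

definition I_mon :: "nat \<Rightarrow> (nat \<rightharpoonup> nat) set" where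
  "I_mon n = {\<alpha>. dom \<alpha> \<subseteq> Omega n \<and> ran \<alpha> \<subseteq> Omega n \<and> inj_on \<alpha> (dom \<alpha>)}"

definition AI :: "nat \<Rightarrow> (nat \<rightharpoonup> nat) set" where
  "AI n = {\<alpha> \<in> I_mon n. \<exists>\<sigma>. \<sigma> permutes Omega n \<and> evenperm \<sigma> \<and>
                                (\<forall>x \<in> dom \<alpha>. \<alpha> x = Some (\<sigma> x))}"

definition POI :: "nat \<Rightarrow> (nat \<rightharpoonup> nat) set" where
  "POI n = {\<alpha> \<in> I_mon n. \<forall>x \<in> dom \<alpha>. \<forall>y \<in> dom \<alpha>. x \<le> y \<longrightarrow> the (\<alpha> x) \<le> the (\<alpha> y)}"

definition AO :: "nat \<Rightarrow> (nat \<rightharpoonup> nat) set" where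
  "AO n = AI n \<inter> POI n"

definition id_n :: "nat \<Rightarrow> (nat \<rightharpoonup> nat)" where
  "id_n n = (\<lambda>x. if x \<in> Omega n then Some x else None)"

inductive_set gen_monoid :: "nat \<Rightarrow> (nat \<rightharpoonup> nat) set \<Rightarrow> (nat \<rightharpoonup> nat) set"
  for n :: nat and A :: "(nat \<rightharpoonup> nat) set" where
  gen_id: "id_n n \<in> gen_monoid n A"
| gen_base: "a \<in> A \<Longrightarrow> a \<in> gen_monoid n A"
| gen_comp: "a \<in> gen_monoid n A \<Longrightarrow> b \<in> gen_monoid n A \<Longrightarrow> (b \<circ>\<^sub>m a) \<in> gen_monoid n A"

definition monoid_rank :: "nat \<Rightarrow> (nat \<rightharpoonup> nat) set \<Rightarrow> nat" where
  "monoid_rank n M = (LEAST k. \<exists>A. A \<subseteq> M \<and> finite A \<and> card A = k \<and> gen_monoid n A = M)"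

end

theory Submission
  imports Defs
begin

(* Lower bound: the domain of a product is contained in the domain of each factor, and an
   order-preserving partial injection defined on all of Omega_n is the identity.  Hence the
   partial identity on Omega_n - {i}, which lies in AO_n, forces a generator with domain exactly
   Omega_n - {i}, for every i.

   Upper bound: the elements of AO_n of rank n - 1 are the order-preserving bijections
   Omega_n - {i} -> Omega_n - {j} with i + j even, because such a map extends to a permutation
   only as the cycle (i i+1 ... j) or its inverse, of sign (-1)^(i+j).  The n maps with
   j = i + 2, wrapping around inside each parity class, generate all of them, hence all partial
   identities.  Every order-preserving partial injection of rank at most n - 2 is reached from a
   partial identity of an initial segment by moving gaps of its domain and range downwards with
   rank n - 1 elements, which strictly decreases the sum of the domain or of the range. *)

lemma strict_mono_on_eq_if_image_eq:
  fixes f g :: "'a::wellorder \<Rightarrow> 'b::linorder"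
  assumes f: "strict_mono_on D f" and g: "strict_mono_on D g" and img: "f ` D = g ` D"
    and "x \<in> D"
  shows "f x = g x"
  using \<open>x \<in> D\<close>
proof (induction x rule: less_induct)
  case (less x)
  have le: "f x \<le> g x"
    if f: "strict_mono_on D f" and g: "strict_mono_on D g" and img: "f ` D = g ` D"
      and agree: "\<forall>y\<in>D. y < x \<longrightarrow> f y = g y" for f g :: "'a \<Rightarrow> 'b"
  proof (rule ccontr)
    assume "\<not> f x \<le> g x"
    then have less_fx: "g x < f x" by simp
    have "g x \<in> f ` D" using img less.prems by blast
    then obtain y where y: "y \<in> D" "f y = g x" by (metis imageE)
    have "y < x"
    proof (rule ccontr)
      assume "\<not> y < x"
      then have "x \<le> y" by simp
      then have "f x \<le> f y"
        using f y(1) less.prems by (cases "x = y") (auto dest: strict_mono_onD)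
      then show False using less_fx y(2) by simp
    qed
    then have "g y < g x" using g y(1) less.prems by (simp add: strict_mono_onD)
    moreover have "g y = g x" using agree y \<open>y < x\<close> by simp
    ultimately show False by simp
  qed
  have "\<forall>y\<in>D. y < x \<longrightarrow> f y = g y" using less.IH by blast
  then have "f x \<le> g x" "g x \<le> f x"
    using le[OF f g img] le[OF g f img[symmetric]] by auto
  then show ?case by (rule antisym)
qed

lemma map_comp_assoc: "h \<circ>\<^sub>m (g \<circ>\<^sub>m f) = (h \<circ>\<^sub>m g) \<circ>\<^sub>m f"
  by (rule ext) (simp add: map_comp_def split: option.split)

lemma map_comp_restrict_Some: "f \<circ>\<^sub>m (Some |` X) = f |` X"
  by (rule ext) (simp add: restrict_map_def)

lemma restrict_map_eq_self:
  assumes "dom f \<subseteq> X"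
  shows "f |` X = f"
proof
  fix x
  show "(f |` X) x = f x"
  proof (cases "x \<in> X")
    case False
    then have "x \<notin> dom f" using assms by blast
    with False show ?thesis by (simp add: domIff)
  qed simp
qed

lemma restrict_Some_map_comp: "ran f \<subseteq> X \<Longrightarrow> (Some |` X) \<circ>\<^sub>m f = f"
  by (rule ext) (auto simp: map_comp_def restrict_map_def ran_def split: option.split)

lemma restrict_Some_comp_restrict_Some: "(Some |` X) \<circ>\<^sub>m (Some |` Y) = Some |` (X \<inter> Y)"
  by (rule ext) (simp add: map_comp_def restrict_map_def)

lemma dom_map_comp_subset: "dom (g \<circ>\<^sub>m f) \<subseteq> dom f"
  by (auto simp: map_comp_def split: option.splits)

lemma dom_map_comp_eq: "ran f \<subseteq> dom g \<Longrightarrow> dom (g \<circ>\<^sub>m f) = dom f"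
  by (auto simp: map_comp_def ran_def dom_def split: option.splits)

lemma ran_eq_image_the: "ran f = (\<lambda>x. the (f x)) ` dom f"
  by (force simp: ran_def dom_def image_iff)

lemma permutes_eqI_Diff_singleton:
  assumes \<sigma>: "\<sigma> permutes S" and \<pi>: "\<pi> permutes S" and agree: "\<forall>k\<in>S - {i}. \<sigma> k = \<pi> k"
  shows "\<sigma> = \<pi>"
proof
  fix k
  show "\<sigma> k = \<pi> k"
  proof (cases "k \<in> S - {i}")
    case False
    show ?thesis
    proof (cases "k \<in> S")
      case True
      have "S - {\<sigma> i} = \<sigma> ` (S - {i})" "S - {\<pi> i} = \<pi> ` (S - {i})"
        using \<sigma> \<pi> by (simp_all add: image_set_diff permutes_inj permutes_image)
      moreover have "\<sigma> ` (S - {i}) = \<pi> ` (S - {i})" using agree by simp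
      moreover have "\<sigma> i \<in> S" "\<pi> i \<in> S" "k = i"
        using True False \<sigma> \<pi> by (auto simp: permutes_in_image)
      ultimately have "S - {\<sigma> i} = S - {\<pi> i}" by simp
      with \<open>\<sigma> i \<in> S\<close> \<open>\<pi> i \<in> S\<close> \<open>k = i\<close> show ?thesis by blast
    qed (use False \<sigma> \<pi> in \<open>simp add: permutes_not_in\<close>)
  qed (use agree in blast)
qed

lemma ran_restrict_map_Some: "ran ((\<lambda>x. Some (f x)) |` A) = f ` A"
  by (auto simp: ran_def restrict_map_def)

lemma id_n_eq_restrict_Some: "id_n n = Some |` Omega n"
  by (simp add: id_n_def restrict_map_def)

lemma finite_Omega [simp]: "finite (Omega n)" and card_Omega [simp]: "card (Omega n) = n"
  by (simp_all add: Omega_def)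

lemma I_mon_finite_dom: "\<alpha> \<in> I_mon n \<Longrightarrow> finite (dom \<alpha>)"
  using finite_subset[of "dom \<alpha>" "Omega n"] by (simp add: I_mon_def)

lemma I_mon_finite_ran: "\<alpha> \<in> I_mon n \<Longrightarrow> finite (ran \<alpha>)"
  using finite_subset[of "ran \<alpha>" "Omega n"] by (simp add: I_mon_def)

lemma I_mon_inj_on_the:
  assumes "\<alpha> \<in> I_mon n"
  shows "inj_on (\<lambda>x. the (\<alpha> x)) (dom \<alpha>)"
proof (rule inj_onI)
  fix x y assume "x \<in> dom \<alpha>" "y \<in> dom \<alpha>" "the (\<alpha> x) = the (\<alpha> y)"
  then have "\<alpha> x = \<alpha> y" by (auto simp: domIff)
  with \<open>x \<in> dom \<alpha>\<close> \<open>y \<in> dom \<alpha>\<close> assms show "x = y"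
    by (auto simp: I_mon_def dest: inj_onD)
qed

lemma I_mon_card_ran: "\<alpha> \<in> I_mon n \<Longrightarrow> card (ran \<alpha>) = card (dom \<alpha>)"
  by (simp add: ran_eq_image_the card_image I_mon_inj_on_the)

lemma POI_strict_mono_on:
  assumes "\<alpha> \<in> POI n"
  shows "strict_mono_on (dom \<alpha>) (\<lambda>x. the (\<alpha> x))"
proof (rule mono_imp_strict_mono)
  show "mono_on (dom \<alpha>) (\<lambda>x. the (\<alpha> x))"
    using assms by (auto simp: POI_def intro: mono_onI)
  show "inj_on (\<lambda>x. the (\<alpha> x)) (dom \<alpha>)"
    using assms unfolding POI_def by (blast intro: I_mon_inj_on_the)
qed

lemma POI_eqI:
  assumes "\<alpha> \<in> POI n" "\<beta> \<in> POI n" "dom \<alpha> = dom \<beta>" "ran \<alpha> = ran \<beta>"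
  shows "\<alpha> = \<beta>"
proof
  fix k
  show "\<alpha> k = \<beta> k"
  proof (cases "k \<in> dom \<alpha>")
    case True
    then have "the (\<alpha> k) = the (\<beta> k)"
      using strict_mono_on_eq_if_image_eq[OF POI_strict_mono_on[OF assms(1)]]
        POI_strict_mono_on[OF assms(2)] assms(3,4)
      by (simp add: ran_eq_image_the)
    with True assms(3) show ?thesis by (metis domD option.sel)
  next
    case False
    then have "\<alpha> k = None" by (simp add: domIff)
    moreover from False assms(3) have "\<beta> k = None" by (simp add: domIff)
    ultimately show ?thesis by simp
  qed
qed

lemma POI_map_comp:
  assumes "\<alpha> \<in> POI n" and "\<beta> \<in> POI n"
  shows "\<beta> \<circ>\<^sub>m \<alpha> \<in> POI n"
proof -
  have \<alpha>: "dom \<alpha> \<subseteq> Omega n" "inj_on \<alpha> (dom \<alpha>)"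
    "\<And>x y. x \<in> dom \<alpha> \<Longrightarrow> y \<in> dom \<alpha> \<Longrightarrow> x \<le> y \<Longrightarrow> the (\<alpha> x) \<le> the (\<alpha> y)"
    using assms(1) by (auto simp: POI_def I_mon_def)
  have \<beta>: "ran \<beta> \<subseteq> Omega n" "inj_on \<beta> (dom \<beta>)"
    "\<And>x y. x \<in> dom \<beta> \<Longrightarrow> y \<in> dom \<beta> \<Longrightarrow> x \<le> y \<Longrightarrow> the (\<beta> x) \<le> the (\<beta> y)"
    using assms(2) by (auto simp: POI_def I_mon_def)
  have dom_comp: "\<exists>a. \<alpha> x = Some a \<and> a \<in> dom \<beta>" if "x \<in> dom (\<beta> \<circ>\<^sub>m \<alpha>)" for x
    using that by (auto simp: map_comp_Some_iff)
  have "dom (\<beta> \<circ>\<^sub>m \<alpha>) \<subseteq> Omega n"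
    using \<alpha>(1) dom_map_comp_subset by (rule order_trans[rotated])
  moreover have "ran (\<beta> \<circ>\<^sub>m \<alpha>) \<subseteq> Omega n"
    using \<beta>(1) by (auto simp: ran_def map_comp_Some_iff)
  moreover have "inj_on (\<beta> \<circ>\<^sub>m \<alpha>) (dom (\<beta> \<circ>\<^sub>m \<alpha>))"
  proof (rule inj_onI)
    fix x y assume x: "x \<in> dom (\<beta> \<circ>\<^sub>m \<alpha>)" and y: "y \<in> dom (\<beta> \<circ>\<^sub>m \<alpha>)"
      and eq: "(\<beta> \<circ>\<^sub>m \<alpha>) x = (\<beta> \<circ>\<^sub>m \<alpha>) y"
    obtain a b where ab: "\<alpha> x = Some a" "\<alpha> y = Some b" "a \<in> dom \<beta>" "b \<in> dom \<beta>"
      using dom_comp[OF x] dom_comp[OF y] by blast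
    with eq have "\<beta> a = \<beta> b" by simp
    with ab have "\<alpha> x = \<alpha> y" using inj_onD[OF \<beta>(2)] by simp
    with ab show "x = y" using inj_onD[OF \<alpha>(2)] by blast
  qed
  moreover have "the ((\<beta> \<circ>\<^sub>m \<alpha>) x) \<le> the ((\<beta> \<circ>\<^sub>m \<alpha>) y)"
    if x: "x \<in> dom (\<beta> \<circ>\<^sub>m \<alpha>)" and y: "y \<in> dom (\<beta> \<circ>\<^sub>m \<alpha>)" and "x \<le> y" for x y
  proof -
    obtain a b where ab: "\<alpha> x = Some a" "\<alpha> y = Some b" "a \<in> dom \<beta>" "b \<in> dom \<beta>"
      using dom_comp[OF x] dom_comp[OF y] by blast
    then have "a \<le> b" using \<alpha>(3)[of x y] \<open>x \<le> y\<close> by (simp add: domI)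
    then show ?thesis using \<beta>(3)[of a b] ab by simp
  qed
  ultimately show ?thesis by (simp add: POI_def I_mon_def)
qed

lemma ran_restrict_Some: "ran (Some |` X) = X"
  by (auto simp: ran_def restrict_map_def)

lemma restrict_Some_POI: "X \<subseteq> Omega n \<Longrightarrow> Some |` X \<in> POI n"
  by (auto simp: POI_def I_mon_def restrict_map_def dom_def ran_def inj_on_def)

lemma POI_eq_id_n:
  assumes "\<alpha> \<in> POI n" "dom \<alpha> = Omega n"
  shows "\<alpha> = id_n n"
proof -
  have I: "\<alpha> \<in> I_mon n" using assms(1) by (simp add: POI_def)
  then have "ran \<alpha> \<subseteq> Omega n" "card (ran \<alpha>) = card (Omega n)"
    using I_mon_card_ran[OF I] assms(2) by (auto simp: I_mon_def)
  then have "ran \<alpha> = Omega n" by (simp add: card_subset_eq)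
  then show ?thesis
    using POI_eqI[OF assms(1) restrict_Some_POI[of "Omega n" n]] assms(2)
    by (simp add: id_n_eq_restrict_Some ran_restrict_Some)
qed

definition shift :: "nat \<Rightarrow> nat \<Rightarrow> nat \<Rightarrow> nat" where
  "shift i j k = (if i < k \<and> k \<le> j then k - 1 else if j \<le> k \<and> k < i then k + 1 else k)"

definition shift_perm :: "nat \<Rightarrow> nat \<Rightarrow> nat \<Rightarrow> nat" where
  "shift_perm i j = (shift i j)(i := j)"

definition shift_map :: "nat \<Rightarrow> nat \<Rightarrow> nat \<Rightarrow> (nat \<rightharpoonup> nat)" where
  "shift_map n i j = (\<lambda>k. Some (shift i j k)) |` (Omega n - {i})"

lemma shift_shift: "k \<noteq> j \<Longrightarrow> shift i j (shift j i k) = k"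
  by (auto simp: shift_def)

lemma shift_trans: "k \<noteq> i \<Longrightarrow> shift j l (shift i j k) = shift i l k"
  by (auto simp: shift_def)

lemma shift_neq: "k \<noteq> i \<Longrightarrow> shift i j k \<noteq> j"
  by (auto simp: shift_def)

lemma shift_in_Omega: "i \<in> Omega n \<Longrightarrow> j \<in> Omega n \<Longrightarrow> k \<in> Omega n \<Longrightarrow> shift i j k \<in> Omega n"
  by (auto simp: shift_def Omega_def)

lemma shift_mono: "k \<noteq> i \<Longrightarrow> l \<noteq> i \<Longrightarrow> k \<le> l \<Longrightarrow> shift i j k \<le> shift i j l"
  by (auto simp: shift_def)

lemma inj_on_shift: "inj_on (shift i j) (- {i})"
  by (rule inj_on_inverseI[where g = "shift j i"]) (simp add: shift_shift)

lemma shift_image: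
  assumes "i \<in> Omega n" "j \<in> Omega n"
  shows "shift i j ` (Omega n - {i}) = Omega n - {j}"
proof
  show "shift i j ` (Omega n - {i}) \<subseteq> Omega n - {j}"
    using assms by (auto simp: shift_in_Omega shift_neq)
  show "Omega n - {j} \<subseteq> shift i j ` (Omega n - {i})"
  proof
    fix k assume "k \<in> Omega n - {j}"
    then have "k = shift i j (shift j i k)" "shift j i k \<in> Omega n - {i}"
      using assms by (auto simp: shift_shift shift_in_Omega shift_neq)
    then show "k \<in> shift i j ` (Omega n - {i})" by blast
  qed
qed

lemma dom_shift_map [simp]: "dom (shift_map n i j) = Omega n - {i}"
  by (simp add: shift_map_def)

lemma ran_shift_map: "i \<in> Omega n \<Longrightarrow> j \<in> Omega n \<Longrightarrow> ran (shift_map n i j) = Omega n - {j}"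
  by (simp add: shift_map_def ran_restrict_map_Some shift_image)

lemma shift_map_POI:
  assumes "i \<in> Omega n" "j \<in> Omega n"
  shows "shift_map n i j \<in> POI n"
proof -
  have "inj_on (shift_map n i j) (Omega n - {i})"
    using inj_on_shift[of i j] by (auto simp: shift_map_def inj_on_def)
  moreover have "\<forall>x \<in> Omega n - {i}. \<forall>y \<in> Omega n - {i}. x \<le> y \<longrightarrow>
      the (shift_map n i j x) \<le> the (shift_map n i j y)"
    by (simp add: shift_map_def shift_mono)
  ultimately show ?thesis
    using ran_shift_map[OF assms] by (simp add: POI_def I_mon_def)
qed

lemma shift_map_comp:
  assumes "i \<in> Omega n" "j \<in> Omega n"
  shows "shift_map n j k \<circ>\<^sub>m shift_map n i j = shift_map n i k"
proof
  fix x
  show "(shift_map n j k \<circ>\<^sub>m shift_map n i j) x = shift_map n i k x"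
    using assms
    by (cases "x \<in> Omega n - {i}") (auto simp: shift_map_def shift_in_Omega shift_neq shift_trans)
qed

lemma shift_map_self: "shift_map n i i = Some |` (Omega n - {i})"
  by (auto simp: shift_map_def shift_def restrict_map_def fun_eq_iff)

lemma POI_eq_shift_map:
  assumes "\<alpha> \<in> POI n" "i \<in> Omega n" "j \<in> Omega n"
    and "dom \<alpha> = Omega n - {i}" "ran \<alpha> = Omega n - {j}"
  shows "\<alpha> = shift_map n i j"
  using assms by (intro POI_eqI[OF assms(1) shift_map_POI]) (simp_all add: ran_shift_map)

lemma shift_perm_self: "shift_perm i i = id"
  by (auto simp: shift_perm_def shift_def fun_eq_iff)

lemma shift_perm_Suc:
  assumes "i \<le> m"
  shows "shift_perm i (Suc m) = transpose m (Suc m) \<circ> shift_perm i m"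
proof
  fix k
  consider "k = i" | "k < i" | "i < k \<and> k \<le> m" | "k = Suc m" | "Suc m < k" by linarith
  then show "shift_perm i (Suc m) k = (transpose m (Suc m) \<circ> shift_perm i m) k"
    using assms by cases (auto simp: shift_perm_def shift_def transpose_def)
qed

lemma shift_perm_permutes_interval: "i \<le> j \<Longrightarrow> shift_perm i j permutes {i..j}"
proof (induction j rule: dec_induct)
  case base
  show ?case unfolding shift_perm_self by (rule permutes_id)
next
  case (step m)
  have "shift_perm i m permutes {i..Suc m}"
    using step.IH by (rule permutes_subset) auto
  moreover have "transpose m (Suc m) permutes {i..Suc m}"
    using step.hyps by (intro permutes_swap_id) auto
  ultimately show ?case
    unfolding shift_perm_Suc[OF step.hyps(1)] by (rule permutes_compose)
qed

lemma shift_perm_inverse: "shift_perm j i \<circ> shift_perm i j = id"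
  by (auto simp: shift_perm_def shift_def fun_eq_iff)

lemma inv_shift_perm: "inv (shift_perm i j) = shift_perm j i"
  by (rule inv_unique_comp) (simp_all add: shift_perm_inverse)

lemma shift_perm_permutes: "shift_perm i j permutes {min i j..max i j}"
proof (cases "i \<le> j")
  case False
  then have "inv (shift_perm j i) permutes {j..i}"
    using shift_perm_permutes_interval[of j i] by (simp add: permutes_inv)
  with False show ?thesis by (simp add: inv_shift_perm)
qed (simp add: shift_perm_permutes_interval)

lemma permutation_shift_perm: "permutation (shift_perm i j)"
  using shift_perm_permutes permutes_imp_permutation by blast

lemma evenperm_shift_perm_interval: "i \<le> j \<Longrightarrow> evenperm (shift_perm i j) \<longleftrightarrow> even (j - i)"
proof (induction j rule: dec_induct)
  case base
  then show ?case by (simp add: shift_perm_self)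
next
  case (step m)
  have "evenperm (shift_perm i (Suc m)) \<longleftrightarrow> \<not> evenperm (shift_perm i m)"
    using step.hyps(1)
    by (simp add: shift_perm_Suc evenperm_comp permutation_swap_id permutation_shift_perm evenperm_swap)
  with step.IH step.hyps show ?case by (simp add: Suc_diff_le)
qed

lemma evenperm_shift_perm: "evenperm (shift_perm i j) \<longleftrightarrow> even (i + j)"
proof (cases "i \<le> j")
  case True
  then show ?thesis by (auto simp: evenperm_shift_perm_interval)
next
  case False
  then have "evenperm (inv (shift_perm j i)) \<longleftrightarrow> even (i + j)"
    by (auto simp: evenperm_inv permutation_shift_perm evenperm_shift_perm_interval)
  then show ?thesis by (simp add: inv_shift_perm)
qed

lemma shift_perm_permutes_Omega:
  "i \<in> Omega n \<Longrightarrow> j \<in> Omega n \<Longrightarrow> shift_perm i j permutes Omega n"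
  by (rule permutes_subset[OF shift_perm_permutes]) (auto simp: Omega_def)

lemma shift_map_AO_iff:
  assumes i: "i \<in> Omega n" and j: "j \<in> Omega n"
  shows "shift_map n i j \<in> AO n \<longleftrightarrow> even (i + j)"
proof -
  have agree: "\<forall>k \<in> dom (shift_map n i j). shift_map n i j k = Some (shift_perm i j k)"
    by (simp add: shift_map_def shift_perm_def)
  have "shift_map n i j \<in> AI n \<longleftrightarrow> even (i + j)"
  proof
    assume "shift_map n i j \<in> AI n"
    then obtain \<sigma> where \<sigma>: "\<sigma> permutes Omega n" "evenperm \<sigma>"
      and "\<forall>k \<in> dom (shift_map n i j). shift_map n i j k = Some (\<sigma> k)"
      by (auto simp: AI_def)
    with agree have "\<forall>k \<in> Omega n - {i}. \<sigma> k = shift_perm i j k" by simp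
    then have "\<sigma> = shift_perm i j"
      using permutes_eqI_Diff_singleton[OF \<sigma>(1) shift_perm_permutes_Omega[OF i j]] by blast
    with \<sigma>(2) show "even (i + j)" by (simp add: evenperm_shift_perm)
  next
    assume "even (i + j)"
    then show "shift_map n i j \<in> AI n"
      using agree shift_map_POI[OF i j] shift_perm_permutes_Omega[OF i j]
      by (auto simp: AI_def POI_def evenperm_shift_perm)
  qed
  then show ?thesis using shift_map_POI[OF i j] by (simp add: AO_def)
qed

lemma AO_map_comp:
  assumes "\<alpha> \<in> AO n" "\<beta> \<in> AO n"
  shows "\<beta> \<circ>\<^sub>m \<alpha> \<in> AO n"
proof -
  obtain \<sigma> where \<sigma>: "\<sigma> permutes Omega n" "evenperm \<sigma>" "\<forall>x \<in> dom \<alpha>. \<alpha> x = Some (\<sigma> x)"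
    using assms(1) by (auto simp: AO_def AI_def)
  obtain \<tau> where \<tau>: "\<tau> permutes Omega n" "evenperm \<tau>" "\<forall>x \<in> dom \<beta>. \<beta> x = Some (\<tau> x)"
    using assms(2) by (auto simp: AO_def AI_def)
  have POI: "\<beta> \<circ>\<^sub>m \<alpha> \<in> POI n"
    using assms POI_map_comp by (simp add: AO_def)
  have "permutation \<sigma>" "permutation \<tau>"
    using \<sigma>(1) \<tau>(1) permutes_imp_permutation[OF finite_Omega] by blast+
  then have "\<tau> \<circ> \<sigma> permutes Omega n" "evenperm (\<tau> \<circ> \<sigma>)"
    using \<sigma> \<tau> by (simp_all add: permutes_compose evenperm_comp)
  moreover have "\<forall>x \<in> dom (\<beta> \<circ>\<^sub>m \<alpha>). (\<beta> \<circ>\<^sub>m \<alpha>) x = Some ((\<tau> \<circ> \<sigma>) x)"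
  proof
    fix x assume "x \<in> dom (\<beta> \<circ>\<^sub>m \<alpha>)"
    then obtain k where "\<alpha> x = Some k" "k \<in> dom \<beta>"
      by (metis domD domI map_comp_Some_iff)
    moreover from this \<sigma>(3) have "\<sigma> x = k" by (metis domI option.inject)
    ultimately show "(\<beta> \<circ>\<^sub>m \<alpha>) x = Some ((\<tau> \<circ> \<sigma>) x)"
      using \<tau>(3) by simp
  qed
  moreover have "\<beta> \<circ>\<^sub>m \<alpha> \<in> I_mon n"
    using POI by (simp add: POI_def)
  ultimately have "\<beta> \<circ>\<^sub>m \<alpha> \<in> AI n"
    unfolding AI_def by blast
  with POI show ?thesis by (simp add: AO_def)
qed

lemma id_n_AO: "id_n n \<in> AO n"
proof -
  have "id_n n \<in> POI n" by (simp add: id_n_eq_restrict_Some restrict_Some_POI)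
  moreover have "\<forall>x \<in> dom (id_n n). id_n n x = Some (id x)"
    by (simp add: id_n_def dom_def)
  ultimately show ?thesis
    by (auto simp: AO_def AI_def POI_def intro!: exI[of _ id] permutes_id)
qed

lemma gen_monoid_subset_AO:
  assumes "A \<subseteq> AO n"
  shows "gen_monoid n A \<subseteq> AO n"
proof
  fix x assume "x \<in> gen_monoid n A"
  then show "x \<in> AO n"
    by (induction rule: gen_monoid.induct) (use assms in \<open>auto simp: id_n_AO AO_map_comp\<close>)
qed

lemma gen_monoid_dom_subset_generator:
  assumes "x \<in> gen_monoid n A" "x \<noteq> id_n n"
  shows "\<exists>a \<in> A. a \<noteq> id_n n \<and> dom x \<subseteq> dom a"
  using assms
proof (induction rule: gen_monoid.induct)
  case (gen_comp a b)
  show ?case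
  proof (cases "a = id_n n")
    case True
    have "b \<noteq> id_n n"
    proof
      assume "b = id_n n"
      with True have "b \<circ>\<^sub>m a = id_n n"
        by (simp add: id_n_eq_restrict_Some restrict_Some_comp_restrict_Some)
      with gen_comp.prems show False ..
    qed
    moreover have "dom (b \<circ>\<^sub>m a) \<subseteq> dom b"
      using True by (simp add: id_n_eq_restrict_Some map_comp_restrict_Some)
    ultimately show ?thesis using gen_comp.IH(2) by blast
  next
    case False
    with gen_comp.IH(1) obtain c where "c \<in> A" "c \<noteq> id_n n" "dom a \<subseteq> dom c" by blast
    moreover have "dom (b \<circ>\<^sub>m a) \<subseteq> dom a" by (rule dom_map_comp_subset)
    ultimately show ?thesis by (meson order_trans)
  qed
qed auto

lemma card_generators_AO_ge:
  assumes "A \<subseteq> AO n" "finite A" "gen_monoid n A = AO n"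
  shows "n \<le> card A"
proof -
  have "\<exists>a \<in> A. dom a = Omega n - {i}" if i: "i \<in> Omega n" for i
  proof -
    have "shift_map n i i \<in> gen_monoid n A"
      using assms(3) shift_map_AO_iff[OF i i] by simp
    moreover have "dom (shift_map n i i) \<noteq> dom (id_n n)"
      using i by (auto simp: id_n_eq_restrict_Some)
    then have "shift_map n i i \<noteq> id_n n" by metis
    ultimately obtain a where a: "a \<in> A" "a \<noteq> id_n n" "dom (shift_map n i i) \<subseteq> dom a"
      using gen_monoid_dom_subset_generator by blast
    have "a \<in> POI n"
      using a(1) assms(1) by (auto simp: AO_def)
    then have "dom a \<subseteq> Omega n" "dom a \<noteq> Omega n"
      using a(2) POI_eq_id_n by (auto simp: POI_def I_mon_def)
    with a(3) have "dom a = Omega n - {i}" by auto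
    with a(1) show ?thesis by blast
  qed
  then obtain h where h: "\<And>i. i \<in> Omega n \<Longrightarrow> h i \<in> A \<and> dom (h i) = Omega n - {i}"
    by metis
  have "inj_on h (Omega n)"
  proof (rule inj_onI)
    fix i j assume "i \<in> Omega n" "j \<in> Omega n" "h i = h j"
    with h have "Omega n - {i} = Omega n - {j}" by metis
    with \<open>i \<in> Omega n\<close> show "i = j" by blast
  qed
  moreover have "h ` Omega n \<subseteq> A" using h by blast
  ultimately have "card (Omega n) \<le> card A"
    using card_inj_on_le assms(2) by blast
  then show ?thesis by simp
qed

definition next_same_parity :: "nat \<Rightarrow> nat \<Rightarrow> nat" where
  "next_same_parity n i = (if i + 2 \<le> n then i + 2 else if odd i then 1 else 2)"

definition AO_gens :: "nat \<Rightarrow> (nat \<rightharpoonup> nat) set" where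
  "AO_gens n = (\<lambda>i. shift_map n i (next_same_parity n i)) ` Omega n"

lemma next_same_parity_in_Omega: "2 \<le> n \<Longrightarrow> i \<in> Omega n \<Longrightarrow> next_same_parity n i \<in> Omega n"
  by (auto simp: next_same_parity_def Omega_def)

lemma even_add_next_same_parity: "even (i + next_same_parity n i)"
  by (auto simp: next_same_parity_def)

lemma AO_gens_subset_AO:
  assumes "2 \<le> n"
  shows "AO_gens n \<subseteq> AO n"
proof
  fix a assume "a \<in> AO_gens n"
  then obtain i where i: "i \<in> Omega n" and a: "a = shift_map n i (next_same_parity n i)"
    by (auto simp: AO_gens_def)
  show "a \<in> AO n"
    unfolding a shift_map_AO_iff[OF i next_same_parity_in_Omega[OF assms i]]
    by (rule even_add_next_same_parity)
qed

lemma finite_AO_gens: "finite (AO_gens n)"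
  by (simp add: AO_gens_def)

lemma card_AO_gens: "card (AO_gens n) = n"
proof -
  have "inj_on (\<lambda>i. shift_map n i (next_same_parity n i)) (Omega n)"
  proof (rule inj_onI)
    fix i j assume "i \<in> Omega n" "j \<in> Omega n"
      and "shift_map n i (next_same_parity n i) = shift_map n j (next_same_parity n j)"
    then have "Omega n - {i} = Omega n - {j}" by (metis dom_shift_map)
    with \<open>i \<in> Omega n\<close> show "i = j" by blast
  qed
  then show ?thesis by (simp add: AO_gens_def card_image)
qed

lemma shift_map_in_gen_trans:
  assumes "i \<in> Omega n" "j \<in> Omega n"
    and "shift_map n i j \<in> gen_monoid n A" "shift_map n j k \<in> gen_monoid n A"
  shows "shift_map n i k \<in> gen_monoid n A"
  using gen_monoid.gen_comp[OF assms(3,4)] shift_map_comp[OF assms(1,2)] by simp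

lemma shift_map_next_in_gen:
  "i \<in> Omega n \<Longrightarrow> shift_map n i (next_same_parity n i) \<in> gen_monoid n (AO_gens n)"
  unfolding AO_gens_def by (intro gen_monoid.gen_base imageI)

lemma shift_map_in_gen_up:
  assumes "i \<in> Omega n" "i < j" "j \<le> n" "even (i + j)"
  shows "shift_map n i j \<in> gen_monoid n (AO_gens n)"
  using assms(2-4)
proof (induction j rule: less_induct)
  case (less j)
  have step: "shift_map n k (k + 2) \<in> gen_monoid n (AO_gens n)"
    if "k \<in> Omega n" "k + 2 \<le> n" for k
    using shift_map_next_in_gen[OF that(1)] that(2) by (simp add: next_same_parity_def)
  show ?case
  proof (cases "j = i + 2")
    case True
    with less.prems have "i + 2 \<le> n" by simp
    with True show ?thesis using step[OF assms(1)] by simp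
  next
    case False
    define k where "k = j - 2"
    have k: "i < k" "k < j" "k + 2 = j" "even (i + k)"
      using False less.prems unfolding k_def by presburger+
    then have "k \<in> Omega n" using less.prems assms(1) by (simp add: Omega_def)
    have "shift_map n i k \<in> gen_monoid n (AO_gens n)"
      using less.IH[of k] k less.prems by simp
    moreover have "shift_map n k j \<in> gen_monoid n (AO_gens n)"
      using step[OF \<open>k \<in> Omega n\<close>] k less.prems by simp
    ultimately show ?thesis
      by (rule shift_map_in_gen_trans[OF assms(1) \<open>k \<in> Omega n\<close>])
  qed
qed

lemma shift_map_in_gen:
  assumes n: "2 \<le> n" and i: "i \<in> Omega n" and j: "j \<in> Omega n" and "even (i + j)"
  shows "shift_map n i j \<in> gen_monoid n (AO_gens n)"
proof -
  \<comment> \<open>Go up from \<open>i\<close> to the largest \<open>top\<close> of its parity, wrap around to the smallest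
     \<open>bot\<close>, then go up to \<open>j\<close>.\<close>
  define top where "top = (if even (n + i) then n else n - 1)"
  define bot where "bot = (if odd i then 1 else (2::nat))"
  have top: "top \<in> Omega n" "i \<le> top" "even (i + top)"
    using n i by (auto simp: top_def Omega_def) presburger+
  have bot: "bot \<in> Omega n" "bot \<le> j" "even (bot + j)" "even (i + bot)"
    using n i j \<open>even (i + j)\<close> by (auto simp: bot_def Omega_def)
  have "next_same_parity n top = bot"
    using n i by (auto simp: top_def bot_def next_same_parity_def Omega_def)
  then have wrap: "shift_map n top bot \<in> gen_monoid n (AO_gens n)"
    using shift_map_next_in_gen[OF top(1)] by simp
  have to_bot: "shift_map n i bot \<in> gen_monoid n (AO_gens n)"
  proof (cases "i = top")
    case False
    with top have "shift_map n i top \<in> gen_monoid n (AO_gens n)"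
      using shift_map_in_gen_up[OF i] by (simp add: Omega_def)
    from shift_map_in_gen_trans[OF i top(1) this wrap] show ?thesis .
  qed (use wrap in simp)
  show ?thesis
  proof (cases "j = bot")
    case False
    with bot j have "shift_map n bot j \<in> gen_monoid n (AO_gens n)"
      using shift_map_in_gen_up[OF bot(1)] by (simp add: Omega_def)
    from shift_map_in_gen_trans[OF i bot(1) to_bot this] show ?thesis .
  qed (use to_bot in simp)
qed

lemma restrict_Some_in_gen:
  assumes n: "2 \<le> n" and "X \<subseteq> Omega n"
  shows "Some |` X \<in> gen_monoid n (AO_gens n)"
proof -
  have "Some |` (Omega n - F) \<in> gen_monoid n (AO_gens n)" if "finite F" for F
    using that
  proof (induction F rule: finite_induct)
    case empty
    show ?case using gen_monoid.gen_id by (simp add: id_n_eq_restrict_Some)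
  next
    case (insert p F)
    show ?case
    proof (cases "p \<in> Omega n")
      case True
      then have "Some |` (Omega n - {p}) \<in> gen_monoid n (AO_gens n)"
        using shift_map_in_gen[OF n True True] by (simp add: shift_map_self)
      with insert.IH
      have "Some |` (Omega n - {p}) \<circ>\<^sub>m Some |` (Omega n - F) \<in> gen_monoid n (AO_gens n)"
        by (rule gen_monoid.gen_comp)
      moreover have "(Omega n - {p}) \<inter> (Omega n - F) = Omega n - insert p F" by blast
      ultimately show ?thesis by (simp add: restrict_Some_comp_restrict_Some)
    next
      case False
      then have "Omega n - insert p F = Omega n - F" by blast
      with insert.IH show ?thesis by simp
    qed
  qed
  then have "Some |` (Omega n - (Omega n - X)) \<in> gen_monoid n (AO_gens n)" by simp
  moreover have "Omega n - (Omega n - X) = X" using assms(2) by blast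
  ultimately show ?thesis by simp
qed

lemma dom_map_comp_shift_map:
  assumes i: "i \<in> Omega n" and j: "j \<in> Omega n" and dom: "dom \<beta> \<subseteq> Omega n - {j}"
  shows "dom (\<beta> \<circ>\<^sub>m shift_map n i j) = shift j i ` dom \<beta>"
proof
  show "dom (\<beta> \<circ>\<^sub>m shift_map n i j) \<subseteq> shift j i ` dom \<beta>"
  proof
    fix x assume "x \<in> dom (\<beta> \<circ>\<^sub>m shift_map n i j)"
    then have "x \<noteq> i" "shift i j x \<in> dom \<beta>"
      by (auto simp: shift_map_def map_comp_def restrict_map_def split: if_splits)
    then show "x \<in> shift j i ` dom \<beta>" using shift_shift[of x i j] by force
  qed
  show "shift j i ` dom \<beta> \<subseteq> dom (\<beta> \<circ>\<^sub>m shift_map n i j)"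
  proof
    fix x assume "x \<in> shift j i ` dom \<beta>"
    then obtain y where y: "y \<in> dom \<beta>" "x = shift j i y" by blast
    with dom have "y \<in> Omega n" "y \<noteq> j" by auto
    with y i j have "x \<in> Omega n - {i}" "shift i j x = y"
      by (auto simp: shift_in_Omega shift_neq shift_shift)
    then have "(\<beta> \<circ>\<^sub>m shift_map n i j) x = \<beta> y" by (simp add: shift_map_def)
    with y(1) show "x \<in> dom (\<beta> \<circ>\<^sub>m shift_map n i j)" by (simp add: domIff)
  qed
qed

lemma ran_shift_map_comp:
  assumes "ran \<beta> \<subseteq> Omega n - {i}"
  shows "ran (shift_map n i j \<circ>\<^sub>m \<beta>) = shift i j ` ran \<beta>"
proof
  show "ran (shift_map n i j \<circ>\<^sub>m \<beta>) \<subseteq> shift i j ` ran \<beta>"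
    by (auto simp: ran_def map_comp_Some_iff shift_map_def restrict_map_def split: if_splits)
  show "shift i j ` ran \<beta> \<subseteq> ran (shift_map n i j \<circ>\<^sub>m \<beta>)"
  proof
    fix w assume "w \<in> shift i j ` ran \<beta>"
    then obtain k v where v: "\<beta> k = Some v" "w = shift i j v" by (auto simp: ran_def)
    with assms have "v \<in> Omega n - {i}" by (auto simp: ran_def)
    with v have "(shift_map n i j \<circ>\<^sub>m \<beta>) k = Some w" by (simp add: shift_map_def)
    then show "w \<in> ran (shift_map n i j \<circ>\<^sub>m \<beta>)" by (rule ranI)
  qed
qed

lemma map_comp_shift_map_cancel:
  assumes "i \<in> Omega n" "j \<in> Omega n" "dom \<beta> \<subseteq> Omega n - {j}"
  shows "(\<beta> \<circ>\<^sub>m shift_map n i j) \<circ>\<^sub>m shift_map n j i = \<beta>"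
  using assms
  by (simp flip: map_comp_assoc add: shift_map_comp shift_map_self map_comp_restrict_Some
      restrict_map_eq_self)

lemma shift_map_comp_cancel:
  assumes "i \<in> Omega n" "j \<in> Omega n" "ran \<beta> \<subseteq> Omega n - {i}"
  shows "shift_map n j i \<circ>\<^sub>m (shift_map n i j \<circ>\<^sub>m \<beta>) = \<beta>"
  using assms
  by (simp add: map_comp_assoc shift_map_comp shift_map_self restrict_Some_map_comp)

lemma sum_shift_image_less:
  fixes X :: "nat set"
  assumes "finite X" "g \<notin> X" "e \<in> X" "g < e" "e \<le> t"
  shows "\<Sum>(shift g t ` X) < \<Sum>X"
proof -
  have "inj_on (shift g t) X"
    by (rule inj_on_subset[OF inj_on_shift]) (use assms(2) in blast)
  moreover have "sum (shift g t) X < sum id X"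
  proof (rule sum_strict_mono_ex1[OF assms(1)])
    show "\<forall>x\<in>X. shift g t x \<le> id x" using assms(4,5) by (auto simp: shift_def)
    show "\<exists>x\<in>X. shift g t x < id x" using assms(3-5) by (auto simp: shift_def)
  qed
  ultimately show ?thesis by (simp add: sum.reindex)
qed

lemma card_shift_image: "g \<notin> X \<Longrightarrow> card (shift g t ` X) = card X"
  by (rule card_image, rule inj_on_subset[OF inj_on_shift]) blast

lemma exists_shift_down:
  assumes "D \<subseteq> Omega n" "card D + 2 \<le> n" "D \<noteq> {1..card D}"
  obtains g t e where "g \<in> Omega n" "g \<notin> D" "t \<in> Omega n" "g < t" "even (g + t)"
    "e \<in> D" "g < e" "e \<le> t"
proof -
  have "finite D" using finite_subset[OF assms(1) finite_Omega] .
  then have gaps: "2 \<le> card (Omega n - D)"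
    using card_Diff_subset[OF _ assms(1)] assms(2) by simp
  then have "Omega n - D \<noteq> {}" by (metis card.empty not_numeral_le_zero)
  define g where "g = Min (Omega n - D)"
  have g: "g \<in> Omega n" "g \<notin> D"
    using Min_in[OF _ \<open>Omega n - D \<noteq> {}\<close>] by (simp_all add: g_def)
  have g_min: "g \<le> h" if "h \<in> Omega n" "h \<notin> D" for h
    using that by (simp add: g_def)
  have below_g: "{1..<g} \<subseteq> D"
  proof
    fix x assume "x \<in> {1..<g}"
    with g(1) have "x \<in> Omega n" "\<not> g \<le> x" by (auto simp: Omega_def)
    with g_min show "x \<in> D" by blast
  qed
  obtain d where d: "d \<in> D" "g < d"
  proof (rule ccontr)
    assume "\<not> thesis"
    have "D \<subseteq> {1..<g}"
    proof
      fix x assume "x \<in> D"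
      with that \<open>\<not> thesis\<close> g(2) have "x \<le> g" "x \<noteq> g" by (auto simp: not_less[symmetric])
      moreover from \<open>x \<in> D\<close> assms(1) have "1 \<le> x" by (auto simp: Omega_def)
      ultimately show "x \<in> {1..<g}" by simp
    qed
    with below_g have "D = {1..<g}" by blast
    with assms(3) g(1) show False by (auto simp: Omega_def)
  qed
  have next_gap: "g + 2 \<le> n" if "g + 1 \<in> D"
  proof (rule ccontr)
    assume "\<not> g + 2 \<le> n"
    have "Omega n - D \<subseteq> {g}"
    proof
      fix h assume h: "h \<in> Omega n - D"
      with g_min have "g \<le> h" by blast
      moreover from h \<open>\<not> g + 2 \<le> n\<close> have "h \<le> g + 1" by (simp add: Omega_def)
      moreover from h that have "h \<noteq> g + 1" by blast
      ultimately show "h \<in> {g}" by simp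
    qed
    then have "card (Omega n - D) \<le> card {g}" by (intro card_mono) simp_all
    with gaps show False by simp
  qed
  have "d \<le> n" using d(1) assms(1) by (auto simp: Omega_def)
  consider "even (g + d)" | "odd (g + d)" "g + 1 \<notin> D" | "odd (g + d)" "g + 1 \<in> D" by blast
  then show ?thesis
  proof cases
    case 1
    with g d \<open>d \<le> n\<close> show ?thesis by (intro that[of g d d]) (auto simp: Omega_def)
  next
    case 2
    then have "g + 1 \<noteq> d" using d(1) by blast
    with d(2) have "g + 1 < d" by simp
    with 2 g d \<open>d \<le> n\<close> show ?thesis by (intro that[of "g + 1" d d]) (auto simp: Omega_def)
  next
    case 3
    with g next_gap show ?thesis by (intro that[of g "g + 2" "g + 1"]) (auto simp: Omega_def)
  qed
qed

lemma POI_initial_dom_in_gen: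
  assumes n: "2 \<le> n"
  shows "\<beta> \<in> POI n \<Longrightarrow> dom \<beta> = {1..k} \<Longrightarrow> k + 2 \<le> n \<Longrightarrow> \<beta> \<in> gen_monoid n (AO_gens n)"
proof (induction "\<Sum>(ran \<beta>)" arbitrary: \<beta> rule: less_induct)
  case less
  have I: "\<beta> \<in> I_mon n" using less.prems(1) by (simp add: POI_def)
  then have ran: "ran \<beta> \<subseteq> Omega n" "card (ran \<beta>) = k"
    using I_mon_card_ran[OF I] less.prems(2) by (simp_all add: I_mon_def)
  have "{1..k} \<subseteq> Omega n" using less.prems(3) by (auto simp: Omega_def)
  show ?case
  proof (cases "ran \<beta> = {1..k}")
    case True
    with less.prems(1,2) have "\<beta> = Some |` {1..k}"
      using POI_eqI[OF _ restrict_Some_POI[OF \<open>{1..k} \<subseteq> Omega n\<close>]] by (simp add: ran_restrict_Some)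
    with n \<open>{1..k} \<subseteq> Omega n\<close> show ?thesis by (simp add: restrict_Some_in_gen)
  next
    case False
    with ran(2) less.prems(3) have "card (ran \<beta>) + 2 \<le> n" "ran \<beta> \<noteq> {1..card (ran \<beta>)}"
      by simp_all
    then obtain g t e where gte: "g \<in> Omega n" "g \<notin> ran \<beta>" "t \<in> Omega n" "g < t" "even (g + t)"
      "e \<in> ran \<beta>" "g < e" "e \<le> t"
      by (rule exists_shift_down[OF ran(1)])
    have ran_sub: "ran \<beta> \<subseteq> Omega n - {g}" using ran(1) gte(2) by blast
    define \<beta>' where "\<beta>' = shift_map n g t \<circ>\<^sub>m \<beta>"
    have "\<beta>' \<in> POI n"
      unfolding \<beta>'_def using less.prems(1) shift_map_POI[OF gte(1,3)] by (rule POI_map_comp)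
    moreover have "dom \<beta>' = dom \<beta>"
      unfolding \<beta>'_def using ran_sub by (simp add: dom_map_comp_eq)
    moreover have "ran \<beta>' = shift g t ` ran \<beta>"
      unfolding \<beta>'_def using ran_sub by (rule ran_shift_map_comp)
    then have "\<Sum>(ran \<beta>') < \<Sum>(ran \<beta>)"
      using sum_shift_image_less[OF _ gte(2,6-8)] I_mon_finite_ran[OF I] by simp
    ultimately have "\<beta>' \<in> gen_monoid n (AO_gens n)"
      using less.hyps less.prems(2,3) by simp
    moreover have "shift_map n t g \<in> gen_monoid n (AO_gens n)"
      using shift_map_in_gen[OF n gte(3,1)] gte(5) by (simp add: add.commute)
    ultimately have "shift_map n t g \<circ>\<^sub>m \<beta>' \<in> gen_monoid n (AO_gens n)"
      by (rule gen_monoid.gen_comp)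
    then show ?thesis
      unfolding \<beta>'_def using shift_map_comp_cancel[OF gte(1,3) ran_sub] by simp
  qed
qed

lemma POI_corank_ge_two_in_gen:
  assumes n: "2 \<le> n"
  shows "\<beta> \<in> POI n \<Longrightarrow> card (dom \<beta>) + 2 \<le> n \<Longrightarrow> \<beta> \<in> gen_monoid n (AO_gens n)"
proof (induction "\<Sum>(dom \<beta>)" arbitrary: \<beta> rule: less_induct)
  case less
  have I: "\<beta> \<in> I_mon n" using less.prems(1) by (simp add: POI_def)
  then have dom: "dom \<beta> \<subseteq> Omega n" by (simp add: I_mon_def)
  show ?case
  proof (cases "dom \<beta> = {1..card (dom \<beta>)}")
    case True
    from POI_initial_dom_in_gen[OF n less.prems(1) True less.prems(2)] show ?thesis .
  next
    case False
    with dom less.prems(2) obtain g t e where gte: "g \<in> Omega n" "g \<notin> dom \<beta>" "t \<in> Omega n"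
      "g < t" "even (g + t)" "e \<in> dom \<beta>" "g < e" "e \<le> t"
      by (rule exists_shift_down)
    have dom_sub: "dom \<beta> \<subseteq> Omega n - {g}" using dom gte(2) by blast
    define \<beta>' where "\<beta>' = \<beta> \<circ>\<^sub>m shift_map n t g"
    have "\<beta>' \<in> POI n"
      unfolding \<beta>'_def using shift_map_POI[OF gte(3,1)] less.prems(1) by (rule POI_map_comp)
    moreover have "dom \<beta>' = shift g t ` dom \<beta>"
      unfolding \<beta>'_def using gte(3,1) dom_sub by (rule dom_map_comp_shift_map)
    then have "card (dom \<beta>') = card (dom \<beta>)" "\<Sum>(dom \<beta>') < \<Sum>(dom \<beta>)"
      using card_shift_image[OF gte(2)] sum_shift_image_less[OF _ gte(2,6-8)] I_mon_finite_dom[OF I]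
      by simp_all
    ultimately have "\<beta>' \<in> gen_monoid n (AO_gens n)"
      using less.hyps less.prems(2) by simp
    moreover have "shift_map n g t \<in> gen_monoid n (AO_gens n)"
      using shift_map_in_gen[OF n gte(1,3,5)] .
    ultimately have "\<beta>' \<circ>\<^sub>m shift_map n g t \<in> gen_monoid n (AO_gens n)"
      by (rule gen_monoid.gen_comp[rotated])
    then show ?thesis
      unfolding \<beta>'_def using map_comp_shift_map_cancel[OF gte(3,1) dom_sub] by simp
  qed
qed

lemma AO_subset_gen_monoid_AO_gens:
  assumes n: "2 \<le> n"
  shows "AO n \<subseteq> gen_monoid n (AO_gens n)"
proof
  fix \<alpha> assume \<alpha>: "\<alpha> \<in> AO n"
  then have POI: "\<alpha> \<in> POI n" by (simp add: AO_def)
  then have I: "\<alpha> \<in> I_mon n" by (simp add: POI_def)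
  then have DR: "dom \<alpha> \<subseteq> Omega n" "ran \<alpha> \<subseteq> Omega n" by (simp_all add: I_mon_def)
  have card_Diff: "card (Omega n - dom \<alpha>) = n - card (dom \<alpha>)"
    "card (Omega n - ran \<alpha>) = n - card (dom \<alpha>)"
    using DR I_mon_card_ran[OF I] I_mon_finite_dom[OF I] I_mon_finite_ran[OF I]
    by (simp_all add: card_Diff_subset)
  have "card (dom \<alpha>) \<le> n" using card_mono[OF finite_Omega DR(1)] by simp
  then consider "card (dom \<alpha>) = n" | "card (dom \<alpha>) + 1 = n" | "card (dom \<alpha>) + 2 \<le> n" by linarith
  then show "\<alpha> \<in> gen_monoid n (AO_gens n)"
  proof cases
    case 1
    then have "dom \<alpha> = Omega n" using card_subset_eq[OF finite_Omega DR(1)] by simp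
    then show ?thesis using POI_eq_id_n[OF POI] gen_monoid.gen_id by simp
  next
    case 2
    then have "card (Omega n - dom \<alpha>) = 1" "card (Omega n - ran \<alpha>) = 1"
      using card_Diff by simp_all
    then obtain i j where "Omega n - dom \<alpha> = {i}" "Omega n - ran \<alpha> = {j}"
      by (elim card_1_singletonE)
    then have i: "i \<in> Omega n" and j: "j \<in> Omega n"
      and dr: "dom \<alpha> = Omega n - {i}" "ran \<alpha> = Omega n - {j}"
      using DR by blast+
    have "\<alpha> = shift_map n i j" by (rule POI_eq_shift_map[OF POI i j dr])
    moreover from this \<alpha> have "even (i + j)" using shift_map_AO_iff[OF i j] by simp
    ultimately show ?thesis using shift_map_in_gen[OF n i j] by simp
  next
    case 3
    with n POI show ?thesis by (rule POI_corank_ge_two_in_gen)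
  qed
qed

lemma gen_monoid_AO_gens: "2 \<le> n \<Longrightarrow> gen_monoid n (AO_gens n) = AO n"
  by (intro equalityI gen_monoid_subset_AO AO_gens_subset_AO AO_subset_gen_monoid_AO_gens)

theorem theorem4p8:
  fixes n :: nat
  assumes "n \<ge> 2"
  shows "monoid_rank n (AO n) = n"
  unfolding monoid_rank_def
proof (rule Least_equality)
  show "\<exists>A. A \<subseteq> AO n \<and> finite A \<and> card A = n \<and> gen_monoid n A = AO n"
    using assms
    by (intro exI[of _ "AO_gens n"])
      (simp add: AO_gens_subset_AO finite_AO_gens card_AO_gens gen_monoid_AO_gens)
  show "n \<le> k" if "\<exists>A. A \<subseteq> AO n \<and> finite A \<and> card A = k \<and> gen_monoid n A = AO n" for k
    using that card_generators_AO_ge by blast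
qed

end
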